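(* Let $G$ be a finite simple graph with vertices $v_1,\dots,v_n$ ($n\ge 1$) in which no vertex is adjacent to all other vertices, let $d\ge 1$ be an integer, let $G'$ be the graph constructed from $(G,d)$ as described in the context, and let $h=n(n+1)+d$. Suppose $S_1,\dots,S_h$ are pairwise disjoint vertex sets of $G'$, each inducing a connected subgraph, such that for all $i\ne j$ some edge of $G'$ joins a vertex of $S_i$ to a vertex of $S_j$. If $S_i$ contains a top vertex, then $D_i=\{v_j : m_j\in S_i\}$ is a dominating set of $G$.
   Context: A dominating set of $G$ is a set $D$ of vertices such that every vertex of $G$ either lies in $D$ or is adjacent to a vertex of $D$. Construction of $G'$ from a graph $G$ with vertices $v_1,\dots,v_n$ and an integer $d$: say $v_i$ dominates $v_j$ if $v_i=v_j$ or $v_iv_j$ is an edge of $G$. The vertex set of $G'$ consists of top vertices $t_1,\dots,t_d$, middle vertices $m_1,\dots,m_n$, and bottom vertices $b_{j,k}$ for $1\le j\le n$, $1\le k\le n+1$. Edges: the top vertices form a clique; the middle vertices form an independent set; the bottom vertices form a clique (of size $n(n+1)$); every top vertex is adjacent to every middle vertex; there are no top–bottom edges; middle vertex $m_i$ is adjacent to bottom vertex $b_{j,k}$ if and only if $v_i$ dominates $v_j$ in $G$. *)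

theory Defs
  imports Main
begin

text \<open>The graph G has vertex set {1..n} and a symmetric irreflexive adjacency
relation E (edges only between vertices of {1..n}).\<close>

definition dominates :: "(nat \<Rightarrow> nat \<Rightarrow> bool) \<Rightarrow> nat \<Rightarrow> nat \<Rightarrow> bool" where
  "dominates E i j \<longleftrightarrow> i = j \<or> E i j"

definition dominating_set :: "nat \<Rightarrow> (nat \<Rightarrow> nat \<Rightarrow> bool) \<Rightarrow> nat set \<Rightarrow> bool" where
  "dominating_set n E D \<longleftrightarrow> D \<subseteq> {1..n} \<and> (\<forall>v\<in>{1..n}. v \<in> D \<or> (\<exists>u\<in>D. E u v))"

datatype gvert = Top nat | Mid nat | Bot nat nat

definition gp_verts :: "nat \<Rightarrow> nat \<Rightarrow> gvert set" where
  "gp_verts n d = Top ` {1..d} \<union> Mid ` {1..n} \<union>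
     {Bot j k | j k. j \<in> {1..n} \<and> k \<in> {1..n+1}}"

fun gp_adj0 :: "(nat \<Rightarrow> nat \<Rightarrow> bool) \<Rightarrow> gvert \<Rightarrow> gvert \<Rightarrow> bool" where
  "gp_adj0 E (Top a) (Top b) = (a \<noteq> b)"
| "gp_adj0 E (Top a) (Mid i) = True"
| "gp_adj0 E (Mid i) (Top a) = True"
| "gp_adj0 E (Mid i) (Mid j) = False"
| "gp_adj0 E (Mid i) (Bot j k) = dominates E i j"
| "gp_adj0 E (Bot j k) (Mid i) = dominates E i j"
| "gp_adj0 E (Bot j k) (Bot j' k') = ((j, k) \<noteq> (j', k'))"
| "gp_adj0 E (Top a) (Bot j k) = False"
| "gp_adj0 E (Bot j k) (Top a) = False"

definition gp_adj :: "nat \<Rightarrow> nat \<Rightarrow> (nat \<Rightarrow> nat \<Rightarrow> bool) \<Rightarrow> gvert \<Rightarrow> gvert \<Rightarrow> bool" where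
  "gp_adj n d E x y \<longleftrightarrow> x \<in> gp_verts n d \<and> y \<in> gp_verts n d \<and> gp_adj0 E x y"

definition induces_connected :: "('a \<Rightarrow> 'a \<Rightarrow> bool) \<Rightarrow> 'a set \<Rightarrow> bool" where
  "induces_connected A S \<longleftrightarrow> S \<noteq> {} \<and>
     (\<forall>x\<in>S. \<forall>y\<in>S. (\<lambda>a b. a \<in> S \<and> b \<in> S \<and> A a b)\<^sup>*\<^sup>* x y)"

end

theory Submission
  imports Defs "HOL-Library.Disjoint_Sets"
begin

text \<open>
  G' has exactly h + n vertices, and the h - 1 branch sets other than S_i are disjoint
  from S_i and from each other. So if X is a set of vertices that none of them lies
  inside, then S_i \<union> X can have at most n + 1 elements. If S_i contains a top vertex,
  the budget is exceeded in each of three situations: (1) another branch set is a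
  single middle vertex m_u (take X the n + 1 bottom vertices b_{w,k} for a vertex w not
  dominated by v_u, which exists as v_u is not universal); (2) S_i also contains a bottom
  vertex (take X all middle vertices; by (1) and connectivity no other branch set consists
  of middle vertices only); (3) S_i has no bottom vertex but some v_j is not dominated
  by D_i (take X the bottom vertices b_{j,k}, none of which has a neighbour in S_i).
\<close>

lemma card_disjoint_family_le:
  assumes "finite V" "Y \<subseteq> V" "disjoint_family_on S L"
    and meets: "\<And>l. l \<in> L \<Longrightarrow> S l \<inter> (V - Y) \<noteq> {}"
  shows "card L + card Y \<le> card V"
proof -
  obtain r where r: "\<And>l. l \<in> L \<Longrightarrow> r l \<in> S l \<inter> (V - Y)"
    using bchoice[of L "\<lambda>l x. x \<in> S l \<inter> (V - Y)"] meets by blast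
  have "inj_on r L"
  proof (rule inj_onI)
    fix l l' assume "l \<in> L" "l' \<in> L" "r l = r l'"
    then have "r l \<in> S l \<inter> S l'" using r by (metis IntD1 IntI)
    then show "l = l'"
      using \<open>disjoint_family_on S L\<close> \<open>l \<in> L\<close> \<open>l' \<in> L\<close>
      unfolding disjoint_family_on_def by blast
  qed
  then have "card L \<le> card (V - Y)"
    using r \<open>finite V\<close> by (metis card_inj_on_le finite_Diff image_subset_iff IntD2)
  then show ?thesis
    using assms(1,2) card_mono[OF assms(1,2)] by (simp add: card_Diff_subset finite_subset)
qed

lemma induces_connected_independent_singleton:
  assumes "induces_connected A P" "P \<subseteq> I" "\<And>x y. x \<in> I \<Longrightarrow> y \<in> I \<Longrightarrow> \<not> A x y"
  shows "\<exists>x. P = {x}"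
proof -
  obtain x where x: "x \<in> P" using assms(1) unfolding induces_connected_def by blast
  have "y = x" if y: "y \<in> P" for y
  proof -
    have "(\<lambda>a b. a \<in> P \<and> b \<in> P \<and> A a b)\<^sup>*\<^sup>* x y"
      using assms(1) x y unfolding induces_connected_def by blast
    then show "y = x"
      by (cases rule: converse_rtranclpE) (use assms(2,3) in blast)+
  qed
  then show ?thesis using x by blast
qed

lemma gp_verts_eq:
  "gp_verts n d = Top ` {1..d} \<union> Mid ` {1..n} \<union> case_prod Bot ` ({1..n} \<times> {1..n+1})"
  unfolding gp_verts_def by auto

lemma finite_gp_verts: "finite (gp_verts n d)"
  by (simp add: gp_verts_eq)

lemma card_gp_verts_le: "card (gp_verts n d) \<le> d + n + n * (n + 1)"
proof -
  have "card (gp_verts n d)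
      \<le> card (Top ` {1..d}) + card (Mid ` {1..n}) + card (case_prod Bot ` ({1..n} \<times> {1..n+1}))"
    unfolding gp_verts_eq by (meson add_le_mono card_Un_le le_refl order_trans)
  also have "\<dots> \<le> d + n + n * (n + 1)"
    using card_image_le[of "{1..d}" Top] card_image_le[of "{1..n}" Mid]
      card_image_le[of "{1..n} \<times> {1..n+1}" "case_prod Bot"]
    by simp
  finally show ?thesis .
qed

lemma Top_in_gp_verts_iff [simp]: "Top a \<in> gp_verts n d \<longleftrightarrow> a \<in> {1..d}"
  and Mid_in_gp_verts_iff [simp]: "Mid u \<in> gp_verts n d \<longleftrightarrow> u \<in> {1..n}"
  and Bot_in_gp_verts_iff [simp]: "Bot j k \<in> gp_verts n d \<longleftrightarrow> j \<in> {1..n} \<and> k \<in> {1..n+1}"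
  by (auto simp: gp_verts_def)

lemma card_Bot_row: "card (Bot j ` {1..n+1}) = n + 1"
  by (simp add: card_image inj_on_def)

lemma card_Mid_row: "card (Mid ` {1..n}) = n"
  by (simp add: card_image inj_on_def)

lemma card_insert_le_card_Un:
  assumes "finite P" "finite X" "x \<in> P" "x \<notin> X"
  shows "card X + 1 \<le> card (P \<union> X)"
proof -
  have "card (insert x X) \<le> card (P \<union> X)"
    using assms by (intro card_mono) auto
  then show ?thesis using assms by simp
qed

locale clique_model =
  fixes n d h :: nat and E :: "nat \<Rightarrow> nat \<Rightarrow> bool" and S :: "nat \<Rightarrow> gvert set"
  assumes h_eq: "h = n * (n + 1) + d"
    and S_sub: "\<And>j. j \<in> {1..h} \<Longrightarrow> S j \<subseteq> gp_verts n d"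
    and S_disj: "\<And>j l. j \<in> {1..h} \<Longrightarrow> l \<in> {1..h} \<Longrightarrow> j \<noteq> l \<Longrightarrow> S j \<inter> S l = {}"
    and S_conn: "\<And>j. j \<in> {1..h} \<Longrightarrow> induces_connected (gp_adj n d E) (S j)"
    and S_touch: "\<And>j l. j \<in> {1..h} \<Longrightarrow> l \<in> {1..h} \<Longrightarrow> j \<noteq> l \<Longrightarrow>
                    \<exists>x\<in>S j. \<exists>y\<in>S l. gp_adj n d E x y"
begin

lemma finite_S: "j \<in> {1..h} \<Longrightarrow> finite (S j)"
  using S_sub finite_gp_verts finite_subset by blast

lemma card_S_Un_le:
  assumes i: "i \<in> {1..h}" and X: "X \<subseteq> gp_verts n d"
    and escapes: "\<And>l. l \<in> {1..h} \<Longrightarrow> l \<noteq> i \<Longrightarrow> \<not> S l \<subseteq> X"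
  shows "card (S i \<union> X) \<le> n + 1"
proof -
  let ?L = "{1..h} - {i}"
  have "card ?L + card (S i \<union> X) \<le> card (gp_verts n d)"
  proof (rule card_disjoint_family_le[OF finite_gp_verts])
    show "S i \<union> X \<subseteq> gp_verts n d" using S_sub[OF i] X by blast
    show "disjoint_family_on S ?L" using S_disj by (auto simp: disjoint_family_on_def)
    show "S l \<inter> (gp_verts n d - (S i \<union> X)) \<noteq> {}" if "l \<in> ?L" for l
      using that escapes S_sub S_disj[OF _ i] by blast
  qed
  then show ?thesis using card_gp_verts_le[of n d] h_eq i by simp
qed

lemma no_Mid_singleton_branch:
  assumes i: "i \<in> {1..h}" and top: "Top a \<in> S i"
    and y: "y \<in> {1..h}" "y \<noteq> i" and Sy: "S y = {Mid u}"
    and w: "w \<in> {1..n}" "\<not> dominates E u w"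
  shows False
proof -
  let ?X = "Bot w ` {1..n+1}"
  have "card (S i \<union> ?X) \<le> n + 1"
  proof (rule card_S_Un_le[OF i])
    show "?X \<subseteq> gp_verts n d" using w by auto
    show "\<not> S l \<subseteq> ?X" if l: "l \<in> {1..h}" "l \<noteq> i" for l
    proof (cases "l = y")
      case False
      then obtain x where "x \<in> S l" "gp_adj n d E x (Mid u)"
        using S_touch[OF l(1) y(1)] Sy by auto
      then show ?thesis using w(2) by (auto simp: gp_adj_def)
    qed (use Sy in auto)
  qed
  moreover have "n + 1 + 1 \<le> card (S i \<union> ?X)"
    using card_insert_le_card_Un[OF finite_S[OF i] _ top, of ?X] card_Bot_row by auto
  ultimately show False by simp
qed

lemma no_Top_Bot_branch:
  assumes i: "i \<in> {1..h}" and top: "Top a \<in> S i" and bot: "Bot j k \<in> S i"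
    and no_Mid_singleton: "\<And>l u. l \<in> {1..h} \<Longrightarrow> l \<noteq> i \<Longrightarrow> S l \<noteq> {Mid u}"
  shows False
proof -
  let ?X = "Mid ` {1..n}"
  have "card (S i \<union> ?X) \<le> n + 1"
  proof (rule card_S_Un_le[OF i])
    show "?X \<subseteq> gp_verts n d" by auto
    show "\<not> S l \<subseteq> ?X" if l: "l \<in> {1..h}" "l \<noteq> i" for l
    proof
      assume Mids: "S l \<subseteq> ?X"
      have "\<exists>x. S l = {x}"
        by (rule induces_connected_independent_singleton[OF S_conn[OF l(1)] Mids])
          (auto simp: gp_adj_def)
      then show False using Mids no_Mid_singleton[OF l] by blast
    qed
  qed
  moreover have "card (insert (Top a) (insert (Bot j k) ?X)) \<le> card (S i \<union> ?X)"
    using top bot finite_S[OF i] by (intro card_mono) auto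
  moreover have "card (insert (Top a) (insert (Bot j k) ?X)) = n + 2"
    using card_Mid_row[of n] by (simp add: image_iff)
  ultimately show False by simp
qed

lemma Bot_free_branch_dominates:
  assumes i: "i \<in> {1..h}" and top: "Top a \<in> S i" and no_bot: "\<And>j k. Bot j k \<notin> S i"
    and j: "j \<in> {1..n}"
  shows "\<exists>u. Mid u \<in> S i \<and> dominates E u j"
proof (rule ccontr)
  assume undominated: "\<nexists>u. Mid u \<in> S i \<and> dominates E u j"
  let ?X = "Bot j ` {1..n+1}"
  have "card (S i \<union> ?X) \<le> n + 1"
  proof (rule card_S_Un_le[OF i])
    show "?X \<subseteq> gp_verts n d" using j by auto
    show "\<not> S l \<subseteq> ?X" if l: "l \<in> {1..h}" "l \<noteq> i" for l
    proof -
      obtain x y where "x \<in> S l" "y \<in> S i" "gp_adj n d E x y"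
        using S_touch[OF l(1) i l(2)] by blast
      moreover have "x \<notin> ?X"
        using \<open>y \<in> S i\<close> \<open>gp_adj n d E x y\<close> undominated no_bot
        by (cases y) (auto simp: gp_adj_def)
      ultimately show ?thesis by blast
    qed
  qed
  moreover have "n + 1 + 1 \<le> card (S i \<union> ?X)"
    using card_insert_le_card_Un[OF finite_S[OF i] _ top, of ?X] card_Bot_row by auto
  ultimately show False by simp
qed

theorem Top_branch_dominating:
  assumes no_universal: "\<forall>v\<in>{1..n}. \<exists>u\<in>{1..n}. u \<noteq> v \<and> \<not> E v u"
    and i: "i \<in> {1..h}" and top: "Top a \<in> S i"
  shows "dominating_set n E {j. Mid j \<in> S i}"
proof -
  have no_Mid_singleton: "S l \<noteq> {Mid u}" if l: "l \<in> {1..h}" "l \<noteq> i" for l u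
  proof
    assume Sl: "S l = {Mid u}"
    then have "u \<in> {1..n}" using S_sub[OF l(1)] by auto
    with no_universal obtain w where w: "w \<in> {1..n}" "w \<noteq> u" "\<not> E u w" by blast
    then have "\<not> dominates E u w" by (simp add: dominates_def)
    then show False by (rule no_Mid_singleton_branch[OF i top l Sl w(1)])
  qed
  have no_bot: "Bot j k \<notin> S i" for j k
  proof
    assume "Bot j k \<in> S i"
    then show False by (rule no_Top_Bot_branch[OF i top _ no_Mid_singleton])
  qed
  have dominated: "\<exists>u. Mid u \<in> S i \<and> dominates E u v" if "v \<in> {1..n}" for v
    by (rule Bot_free_branch_dominates[OF i top no_bot that])
  have "{j. Mid j \<in> S i} \<subseteq> {1..n}"
    using S_sub[OF i] by auto
  with dominated show ?thesis
    unfolding dominating_set_def dominates_def by blast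
qed

end

theorem lemma5:
  fixes n d h :: nat and E :: "nat \<Rightarrow> nat \<Rightarrow> bool" and S :: "nat \<Rightarrow> gvert set" and i :: nat
  assumes n_pos: "n \<ge> 1" and d_pos: "d \<ge> 1"
    and E_sym: "\<forall>u v. E u v \<longrightarrow> E v u"
    and E_irrefl: "\<forall>u. \<not> E u u"
    and E_verts: "\<forall>u v. E u v \<longrightarrow> u \<in> {1..n} \<and> v \<in> {1..n}"
    and no_universal: "\<forall>v\<in>{1..n}. \<exists>u\<in>{1..n}. u \<noteq> v \<and> \<not> E v u"
    and h_def: "h = n * (n + 1) + d"
    and S_sub: "\<forall>j\<in>{1..h}. S j \<subseteq> gp_verts n d"
    and S_disj: "\<forall>j\<in>{1..h}. \<forall>l\<in>{1..h}. j \<noteq> l \<longrightarrow> S j \<inter> S l = {}"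
    and S_conn: "\<forall>j\<in>{1..h}. induces_connected (gp_adj n d E) (S j)"
    and S_touch: "\<forall>j\<in>{1..h}. \<forall>l\<in>{1..h}. j \<noteq> l \<longrightarrow>
                    (\<exists>x\<in>S j. \<exists>y\<in>S l. gp_adj n d E x y)"
    and i_range: "i \<in> {1..h}"
    and top_in: "\<exists>a. Top a \<in> S i"
  shows "dominating_set n E {j. Mid j \<in> S i}"
proof -
  interpret clique_model n d h E S
    using h_def S_sub S_disj S_conn S_touch by unfold_locales simp_all
  from top_in obtain a where "Top a \<in> S i" by blast
  then show ?thesis using Top_branch_dominating[OF no_universal i_range] by blast
qed

end
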